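(* If a soft aura topological space $(X,\widetilde{\tau},\mathfrak{a}_E,E)$ is soft $\mathfrak{a}$-$T_1$, then $\mathrm{cl}_{\mathfrak{a}}(\{x\}_E)=\{x\}_E$ for every $x\in X$.
   Context: For a nonempty set $X$ and nonempty parameter set $E$, a soft set is a map $F:E\to\mathcal{P}(X)$, written $(F,E)$. A soft topology $\widetilde{\tau}$ is a family of soft sets containing the soft sets with all values $\emptyset$ and all values $X$, closed under arbitrary parameterwise unions and finite parameterwise intersections. A soft scope function is a map $\mathfrak{a}_E:X\to\widetilde{\tau}$ with $x\in\mathfrak{a}_E(x)(e)$ for all $x\in X,e\in E$; $(X,\widetilde{\tau},\mathfrak{a}_E,E)$ is a soft aura topological space. $\mathrm{cl}_{\mathfrak{a}}(G,E)(e)=\{y\in X:\mathfrak{a}_E(y)(e)\cap G(e)\neq\emptyset\}$. $\{x\}_E$ denotes the soft set with value $\{x\}$ at every $e\in E$. The space is soft $\mathfrak{a}$-$T_1$ if for all distinct $x,y\in X$ and all $e\in E$, $y\notin\mathfrak{a}_E(x)(e)$ and $x\notin\mathfrak{a}_E(y)(e)$. *)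

theory Defs
  imports Main
begin

(* A soft set (F,E) over X is represented as a function F :: 'e \<Rightarrow> 'a set with
   F e \<subseteq> X for e \<in> E, and F e = {} for e \<notin> E (extensional convention). *)
definition soft_set :: "'a set \<Rightarrow> 'e set \<Rightarrow> ('e \<Rightarrow> 'a set) \<Rightarrow> bool" where
  "soft_set X E F \<longleftrightarrow> (\<forall>e\<in>E. F e \<subseteq> X) \<and> (\<forall>e. e \<notin> E \<longrightarrow> F e = {})"

definition soft_null :: "'e set \<Rightarrow> 'e \<Rightarrow> 'a set" where
  "soft_null E = (\<lambda>e. {})"

definition soft_absolute :: "'a set \<Rightarrow> 'e set \<Rightarrow> 'e \<Rightarrow> 'a set" where
  "soft_absolute X E = (\<lambda>e. if e \<in> E then X else {})"

definition soft_point :: "'e set \<Rightarrow> 'a \<Rightarrow> 'e \<Rightarrow> 'a set" where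
  "soft_point E x = (\<lambda>e. if e \<in> E then {x} else {})"

definition soft_topology :: "'a set \<Rightarrow> 'e set \<Rightarrow> ('e \<Rightarrow> 'a set) set \<Rightarrow> bool" where
  "soft_topology X E T \<longleftrightarrow>
     (\<forall>F\<in>T. soft_set X E F) \<and>
     soft_null E \<in> T \<and> soft_absolute X E \<in> T \<and>
     (\<forall>S\<subseteq>T. (\<lambda>e. \<Union>F\<in>S. F e) \<in> T) \<and>
     (\<forall>F\<in>T. \<forall>G\<in>T. (\<lambda>e. F e \<inter> G e) \<in> T)"

definition soft_scope_function ::
  "'a set \<Rightarrow> 'e set \<Rightarrow> ('e \<Rightarrow> 'a set) set \<Rightarrow> ('a \<Rightarrow> 'e \<Rightarrow> 'a set) \<Rightarrow> bool" where
  "soft_scope_function X E T a \<longleftrightarrow> (\<forall>x\<in>X. a x \<in> T \<and> (\<forall>e\<in>E. x \<in> a x e))"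

definition soft_aura_space ::
  "'a set \<Rightarrow> 'e set \<Rightarrow> ('e \<Rightarrow> 'a set) set \<Rightarrow> ('a \<Rightarrow> 'e \<Rightarrow> 'a set) \<Rightarrow> bool" where
  "soft_aura_space X E T a \<longleftrightarrow> X \<noteq> {} \<and> E \<noteq> {} \<and> soft_topology X E T \<and> soft_scope_function X E T a"

definition soft_aura_closure ::
  "'a set \<Rightarrow> 'e set \<Rightarrow> ('a \<Rightarrow> 'e \<Rightarrow> 'a set) \<Rightarrow> ('e \<Rightarrow> 'a set) \<Rightarrow> 'e \<Rightarrow> 'a set" where
  "soft_aura_closure X E a G = (\<lambda>e. if e \<in> E then {y\<in>X. a y e \<inter> G e \<noteq> {}} else {})"

definition soft_aura_T1 :: "'a set \<Rightarrow> 'e set \<Rightarrow> ('a \<Rightarrow> 'e \<Rightarrow> 'a set) \<Rightarrow> bool" where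
  "soft_aura_T1 X E a \<longleftrightarrow>
     (\<forall>x\<in>X. \<forall>y\<in>X. x \<noteq> y \<longrightarrow> (\<forall>e\<in>E. y \<notin> a x e \<and> x \<notin> a y e))"

end

theory Submission
  imports Defs
begin

lemma soft_aura_closure_soft_point:
  "soft_aura_closure X E a (soft_point E x) e = (if e \<in> E then {y \<in> X. x \<in> a y e} else {})"
  unfolding soft_aura_closure_def soft_point_def by auto

lemma soft_aura_space_scope_contains_self:
  assumes "soft_aura_space X E T a" and "x \<in> X" and "e \<in> E"
  shows "x \<in> a x e"
  using assms unfolding soft_aura_space_def soft_scope_function_def by blast

lemma soft_aura_T1_points_whose_scope_contains:
  assumes "soft_aura_T1 X E a" and "x \<in> X" and "e \<in> E" and "x \<in> a x e"
  shows "{y \<in> X. x \<in> a y e} = {x}"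
  using assms unfolding soft_aura_T1_def by auto

theorem theorem6p6:
  fixes X :: "'a set" and E :: "'e set" and T :: "('e \<Rightarrow> 'a set) set"
    and a :: "'a \<Rightarrow> 'e \<Rightarrow> 'a set"
  assumes "soft_aura_space X E T a"
    and "soft_aura_T1 X E a"
    and "x \<in> X"
  shows "soft_aura_closure X E a (soft_point E x) = soft_point E x"
proof
  fix e
  have "soft_aura_closure X E a (soft_point E x) e
      = (if e \<in> E then {y \<in> X. x \<in> a y e} else {})"
    by (rule soft_aura_closure_soft_point)
  also have "\<dots> = soft_point E x e"
    using soft_aura_T1_points_whose_scope_contains[OF assms(2,3)]
      soft_aura_space_scope_contains_self[OF assms(1,3)]
    by (simp add: soft_point_def)
  finally show "soft_aura_closure X E a (soft_point E x) e = soft_point E x e" .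
qed

end
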